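(* Let $n\ge 3$ be an integer and let $c>0$ be a real constant satisfying \[ 2c + \frac{2}{3}c^2 - \frac{2c}{3(n-2)} > 1 . \] Put $d = \lceil \sqrt{c(n-2)}\,\rceil$. Then there exists a real polynomial on $\mathbb{R}^n$ of degree $d$ if $d$ is even, and of degree $d+1$ if $d$ is odd, which is a $\tfrac13$-approximation of $NAE_n$.
   Context: $NAE_n:\{0,1\}^n\to\{0,1\}$ is the function that equals $1$ iff $x\in\{0^n,1^n\}$, i.e. all bits of the input are the same. A real polynomial $q$ on $\mathbb{R}^n$ is a $\tfrac13$-approximation of $g:\{0,1\}^n\to\{0,1\}$ if $|g(x)-q(x)|\le \tfrac13$ for every $x\in\{0,1\}^n$. *)

theory Defs
  imports Complex_Main
begin

text \<open>Real polynomials in the n variables x_0,...,x_(n-1), represented by their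
coefficient function on exponent vectors (monomials) alpha :: nat => nat.\<close>

definition mpoly_n :: "nat \<Rightarrow> ((nat \<Rightarrow> nat) \<Rightarrow> real) \<Rightarrow> bool" where
  "mpoly_n n p \<longleftrightarrow> finite {\<alpha>. p \<alpha> \<noteq> 0} \<and> (\<forall>\<alpha>. p \<alpha> \<noteq> 0 \<longrightarrow> (\<forall>i\<ge>n. \<alpha> i = 0))"

definition mdeg :: "nat \<Rightarrow> ((nat \<Rightarrow> nat) \<Rightarrow> real) \<Rightarrow> nat" where
  "mdeg n p = Max (insert 0 ((\<lambda>\<alpha>. \<Sum>i<n. \<alpha> i) ` {\<alpha>. p \<alpha> \<noteq> 0}))"

definition meval :: "nat \<Rightarrow> ((nat \<Rightarrow> nat) \<Rightarrow> real) \<Rightarrow> (nat \<Rightarrow> real) \<Rightarrow> real" where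
  "meval n p x = (\<Sum>\<alpha>\<in>{\<alpha>. p \<alpha> \<noteq> 0}. p \<alpha> * (\<Prod>i<n. x i ^ \<alpha> i))"

definition bool_pt :: "nat \<Rightarrow> (nat \<Rightarrow> real) \<Rightarrow> bool" where
  "bool_pt n x \<longleftrightarrow> (\<forall>i<n. x i = 0 \<or> x i = 1)"

definition NAE :: "nat \<Rightarrow> (nat \<Rightarrow> real) \<Rightarrow> real" where
  "NAE n x = (if (\<forall>i<n. x i = 0) \<or> (\<forall>i<n. x i = 1) then 1 else 0)"

definition approx13 :: "nat \<Rightarrow> ((nat \<Rightarrow> nat) \<Rightarrow> real) \<Rightarrow> ((nat \<Rightarrow> real) \<Rightarrow> real) \<Rightarrow> bool" where
  "approx13 n p g \<longleftrightarrow> (\<forall>x. bool_pt n x \<longrightarrow> \<bar>g x - meval n p x\<bar> \<le> 1/3)"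

end

theory Submission
  imports Defs "HOL-Library.Indicator_Function"
begin

text \<open>Write y(k) = (2k - n)/(n - 2) and \<delta> = 2/(n - 2). For 0 < k < n we have |y(k)| \<le> 1, so
  |T_D(y(k))| \<le> 1 for the Chebyshev polynomial T_D, while the two constant inputs k = 0 and k = n
  give y = \<plusminus>(1 + \<delta>), where T_D (D even) takes a common value
  M \<ge> 1 + D^2 \<delta> + D^2 (D^2 - 1) \<delta>^2 / 6 \<ge> 2, the last step by the hypothesis on c and D^2 \<ge> c (n - 2).
  So T_D(y(k)) / max 3 M is a 1/3-approximation of NAE as a function of the Hamming weight k.
  Being a polynomial of degree D in k, it is a combination \<Sum>_j c_j C(k, j) with c_j = 0 for j > D,
  i.e. the value at weight k of the symmetric multilinear polynomial \<Sum>_S c_|S| x^S of degree at most D;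
  adding a multiple of x_0^D - x_0, which vanishes on the cube, makes the degree exactly D.\<close>

section \<open>Chebyshev polynomials\<close>

fun chebyshev_T :: "nat \<Rightarrow> real \<Rightarrow> real" where
  "chebyshev_T 0 y = 1"
| "chebyshev_T (Suc 0) y = y"
| "chebyshev_T (Suc (Suc m)) y = 2 * y * chebyshev_T (Suc m) y - chebyshev_T m y"

lemma chebyshev_T_cos: "chebyshev_T m (cos t) = cos (real m * t)"
proof (induction m rule: induct_nat_012)
  case (ge2 m)
  have "cos ((real m + 1) * t + t) + cos ((real m + 1) * t - t) = 2 * cos t * cos ((real m + 1) * t)"
    by (simp add: cos_add cos_diff)
  moreover have "(real m + 1) * t + t = real (Suc (Suc m)) * t" "(real m + 1) * t - t = real m * t"
    by (simp_all add: algebra_simps)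
  ultimately show ?case using ge2 by (simp add: algebra_simps)
qed simp_all

lemma abs_chebyshev_T_le_1: "\<bar>y\<bar> \<le> 1 \<Longrightarrow> \<bar>chebyshev_T m y\<bar> \<le> 1"
  using chebyshev_T_cos[of m "arccos y"] by (simp add: cos_arccos)

lemma chebyshev_T_minus: "chebyshev_T m (- y) = (-1) ^ m * chebyshev_T m y"
  by (induction m rule: induct_nat_012) (simp_all add: algebra_simps)

definition chebyshev_T_minorant :: "real \<Rightarrow> nat \<Rightarrow> real" where
  "chebyshev_T_minorant \<delta> m = 1 + (real m)\<^sup>2 * \<delta> + (real m)\<^sup>2 * ((real m)\<^sup>2 - 1) * \<delta>\<^sup>2 / 6"

lemma chebyshev_T_minorant_second_difference:
  assumes "0 \<le> \<delta>"
  shows "chebyshev_T_minorant \<delta> (Suc (Suc m)) - chebyshev_T_minorant \<delta> (Suc m)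
    \<le> chebyshev_T_minorant \<delta> (Suc m) - chebyshev_T_minorant \<delta> m + 2 * \<delta> * chebyshev_T_minorant \<delta> (Suc m)"
proof -
  have "chebyshev_T_minorant \<delta> (Suc m) - chebyshev_T_minorant \<delta> m
      + 2 * \<delta> * chebyshev_T_minorant \<delta> (Suc m)
      - (chebyshev_T_minorant \<delta> (Suc (Suc m)) - chebyshev_T_minorant \<delta> (Suc m))
      = (real m + 1)\<^sup>2 * (real m * (real m + 2)) * \<delta> ^ 3 / 3"
    unfolding chebyshev_T_minorant_def by (simp add: field_simps power2_eq_square power3_eq_cube)
  moreover have "0 \<le> (real m + 1)\<^sup>2 * (real m * (real m + 2)) * \<delta> ^ 3 / 3"
    using assms by simp
  ultimately show ?thesis by linarith
qed

text \<open>The second differences of m \<mapsto> T_m(1 + \<delta>) are 2\<delta> T_(m+1)(1 + \<delta>) and those of the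
  minorant are smaller, so induction bounds values and first differences simultaneously.\<close>

lemma chebyshev_T_minorant_le_aux:
  assumes "0 \<le> \<delta>"
  shows "chebyshev_T_minorant \<delta> (Suc m) \<le> chebyshev_T (Suc m) (1 + \<delta>) \<and>
    chebyshev_T_minorant \<delta> (Suc m) - chebyshev_T_minorant \<delta> m
      \<le> chebyshev_T (Suc m) (1 + \<delta>) - chebyshev_T m (1 + \<delta>)"
proof (induction m)
  case 0
  then show ?case by (simp add: chebyshev_T_minorant_def)
next
  case (Suc m)
  have "2 * \<delta> * chebyshev_T_minorant \<delta> (Suc m) \<le> 2 * \<delta> * chebyshev_T (Suc m) (1 + \<delta>)"
    using Suc assms by (intro mult_left_mono) auto
  moreover have "chebyshev_T (Suc (Suc m)) (1 + \<delta>) - chebyshev_T (Suc m) (1 + \<delta>)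
      = chebyshev_T (Suc m) (1 + \<delta>) - chebyshev_T m (1 + \<delta>) + 2 * \<delta> * chebyshev_T (Suc m) (1 + \<delta>)"
    by (simp add: algebra_simps)
  ultimately show ?case
    using Suc chebyshev_T_minorant_second_difference[OF assms, of m] by linarith
qed

lemma chebyshev_T_minorant_le:
  "0 \<le> \<delta> \<Longrightarrow> chebyshev_T_minorant \<delta> m \<le> chebyshev_T m (1 + \<delta>)"
  using chebyshev_T_minorant_le_aux by (cases m) (auto simp: chebyshev_T_minorant_def)

section \<open>Polynomials in the Hamming weight\<close>

definition binomial_eval :: "(nat \<Rightarrow> real) \<Rightarrow> nat \<Rightarrow> real" where
  "binomial_eval c k = (\<Sum>j\<le>k. c j * real (k choose j))"

text \<open>From k C(k,j) = j C(k,j) + (j+1) C(k,j+1);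
  at j = 0 the junk value c (0 - 1) = c 0 is cancelled by the factor j.\<close>
definition times_weight_coeffs :: "(nat \<Rightarrow> real) \<Rightarrow> nat \<Rightarrow> real" where
  "times_weight_coeffs c j = real j * (c j + c (j - 1))"

lemma binomial_eval_times_weight_coeffs:
  "binomial_eval (times_weight_coeffs c) k = real k * binomial_eval c k"
proof (cases k)
  case 0
  then show ?thesis by (simp add: binomial_eval_def times_weight_coeffs_def)
next
  case (Suc m)
  have shifted: "(\<Sum>j\<le>k. real j * c (j - 1) * real (k choose j))
      = (\<Sum>j\<le>k. real (k - j) * c j * real (k choose j))"
  proof -
    have "(\<Sum>j\<le>k. real j * c (j - 1) * real (k choose j))
        = (\<Sum>j\<le>m. real (Suc j) * c j * real (k choose Suc j))"
      unfolding Suc by (subst sum.atMost_Suc_shift) simp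
    also have "\<dots> = (\<Sum>j\<le>m. real (k - j) * c j * real (k choose j))"
    proof (rule sum.cong[OF refl])
      fix j
      have "Suc j * (k choose Suc j) = (k - j) * (k choose j)"
        using Suc_times_binomial[of j m] binomial_absorb_comp[of k j] unfolding Suc by simp
      then have "real (Suc j) * real (k choose Suc j) = real (k - j) * real (k choose j)"
        by (metis of_nat_mult)
      then show "real (Suc j) * c j * real (k choose Suc j) = real (k - j) * c j * real (k choose j)"
        by (metis mult.commute mult.left_commute)
    qed
    also have "\<dots> = (\<Sum>j\<le>k. real (k - j) * c j * real (k choose j))"
      unfolding Suc by simp
    finally show ?thesis .
  qed
  have "binomial_eval (times_weight_coeffs c) k
      = (\<Sum>j\<le>k. real j * c j * real (k choose j)) + (\<Sum>j\<le>k. real j * c (j - 1) * real (k choose j))"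
    by (simp add: binomial_eval_def times_weight_coeffs_def sum.distrib algebra_simps)
  also have "\<dots> = (\<Sum>j\<le>k. real k * (c j * real (k choose j)))"
    unfolding shifted sum.distrib[symmetric]
    by (rule sum.cong[OF refl]) (simp add: of_nat_diff algebra_simps)
  finally show ?thesis by (simp add: binomial_eval_def sum_distrib_left)
qed

definition affine_coeffs :: "real \<Rightarrow> real \<Rightarrow> (nat \<Rightarrow> real) \<Rightarrow> nat \<Rightarrow> real" where
  "affine_coeffs u v c j = u * times_weight_coeffs c j + v * c j"

lemma binomial_eval_affine_coeffs:
  "binomial_eval (affine_coeffs u v c) k = (u * real k + v) * binomial_eval c k"
proof -
  have "binomial_eval (affine_coeffs u v c) k
      = u * binomial_eval (times_weight_coeffs c) k + v * binomial_eval c k"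
    by (simp add: binomial_eval_def affine_coeffs_def sum.distrib sum_distrib_left algebra_simps)
  then show ?thesis by (simp add: binomial_eval_times_weight_coeffs algebra_simps)
qed

lemma binomial_eval_diff:
  "binomial_eval (\<lambda>j. a * c j - c' j) k = a * binomial_eval c k - binomial_eval c' k"
  by (simp add: binomial_eval_def sum_subtractf sum_distrib_left algebra_simps)

lemma binomial_eval_unit: "binomial_eval (\<lambda>j. if j = 0 then 1 else 0) k = 1"
  by (simp add: binomial_eval_def if_distrib[of "\<lambda>a. a * _"] cong: if_cong)

fun chebyshev_coeffs :: "real \<Rightarrow> real \<Rightarrow> nat \<Rightarrow> nat \<Rightarrow> real" where
  "chebyshev_coeffs u v 0 = (\<lambda>j. if j = 0 then 1 else 0)"
| "chebyshev_coeffs u v (Suc 0) = affine_coeffs u v (chebyshev_coeffs u v 0)"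
| "chebyshev_coeffs u v (Suc (Suc m)) =
    (\<lambda>j. 2 * affine_coeffs u v (chebyshev_coeffs u v (Suc m)) j - chebyshev_coeffs u v m j)"

lemma binomial_eval_chebyshev_coeffs:
  "binomial_eval (chebyshev_coeffs u v m) k = chebyshev_T m (u * real k + v)"
proof (induction m rule: induct_nat_012)
  case (ge2 m)
  then show ?case by (simp add: binomial_eval_diff binomial_eval_affine_coeffs)
qed (simp_all add: binomial_eval_affine_coeffs binomial_eval_unit)

lemma chebyshev_coeffs_eq_0: "m < j \<Longrightarrow> chebyshev_coeffs u v m j = 0"
  by (induction m arbitrary: j rule: induct_nat_012)
    (simp_all add: affine_coeffs_def times_weight_coeffs_def)

section \<open>Polynomials on the Boolean cube\<close>

definition monomial_eval :: "nat \<Rightarrow> (nat \<Rightarrow> nat) \<Rightarrow> (nat \<Rightarrow> real) \<Rightarrow> real" where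
  "monomial_eval n \<alpha> x = (\<Prod>i<n. x i ^ \<alpha> i)"

lemma meval_eq_sum_superset:
  assumes "finite F" "{\<alpha>. p \<alpha> \<noteq> 0} \<subseteq> F"
  shows "meval n p x = (\<Sum>\<alpha>\<in>F. p \<alpha> * monomial_eval n \<alpha> x)"
  unfolding meval_def monomial_eval_def
  by (rule sum.mono_neutral_left) (use assms in auto)

lemma monomial_degree_le_mdeg:
  assumes "mpoly_n n p" "p \<alpha> \<noteq> 0"
  shows "(\<Sum>i<n. \<alpha> i) \<le> mdeg n p"
  using assms unfolding mpoly_n_def mdeg_def by (intro Max_ge) auto

lemma mdeg_le:
  assumes "finite {\<alpha>. p \<alpha> \<noteq> 0}" "\<And>\<alpha>. p \<alpha> \<noteq> 0 \<Longrightarrow> (\<Sum>i<n. \<alpha> i) \<le> m"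
  shows "mdeg n p \<le> m"
  using assms unfolding mdeg_def by (intro Max.boundedI) auto

definition sym_multilinear :: "nat \<Rightarrow> (nat \<Rightarrow> real) \<Rightarrow> (nat \<Rightarrow> nat) \<Rightarrow> real" where
  "sym_multilinear n g \<alpha> = (if \<alpha> \<in> indicator ` Pow {..<n} then g (\<Sum>i<n. \<alpha> i) else 0)"

lemma sum_indicator_lessThan:
  fixes n :: nat
  assumes "S \<subseteq> {..<n}"
  shows "(\<Sum>i<n. indicator S i :: nat) = card S"
proof -
  have "(\<Sum>i<n. indicator S i :: nat) = card ({..<n} \<inter> S)"
    by (rule sum_indicator_eq_card) simp
  also have "{..<n} \<inter> S = S" using assms by blast
  finally show ?thesis .
qed

lemma sym_multilinear_support: "{\<alpha>. sym_multilinear n g \<alpha> \<noteq> 0} \<subseteq> indicator ` Pow {..<n}"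
  by (auto simp: sym_multilinear_def split: if_splits)

lemma mpoly_n_sym_multilinear: "mpoly_n n (sym_multilinear n g)"
  unfolding mpoly_n_def
proof (intro conjI allI impI)
  show "finite {\<alpha>. sym_multilinear n g \<alpha> \<noteq> 0}"
    by (rule finite_subset[OF sym_multilinear_support]) simp
  fix \<alpha> i
  assume "sym_multilinear n g \<alpha> \<noteq> 0" "n \<le> i"
  then have "\<alpha> \<in> indicator ` Pow {..<n}"
    using sym_multilinear_support by blast
  then obtain S where "S \<subseteq> {..<n}" "\<alpha> = indicator S"
    by blast
  moreover from \<open>S \<subseteq> {..<n}\<close> \<open>n \<le> i\<close> have "i \<notin> S" by auto
  ultimately show "\<alpha> i = 0" by simp
qed

lemma mdeg_sym_multilinear_le:
  assumes "\<And>j. m < j \<Longrightarrow> g j = 0"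
  shows "mdeg n (sym_multilinear n g) \<le> m"
proof (rule mdeg_le)
  show "finite {\<alpha>. sym_multilinear n g \<alpha> \<noteq> 0}"
    using mpoly_n_sym_multilinear unfolding mpoly_n_def by blast
  show "(\<Sum>i<n. \<alpha> i) \<le> m" if "sym_multilinear n g \<alpha> \<noteq> 0" for \<alpha>
  proof -
    from that have "g (\<Sum>i<n. \<alpha> i) \<noteq> 0"
      by (simp add: sym_multilinear_def split: if_splits)
    then show ?thesis using assms by (meson not_le)
  qed
qed

lemma inj_indicator: "inj (indicator :: 'a set \<Rightarrow> 'a \<Rightarrow> nat)"
  by (rule injI) (metis indicator_eq_1_iff subsetI subset_antisym)

lemma monomial_eval_indicator:
  assumes "bool_pt n x" "S \<subseteq> {..<n}"
  shows "monomial_eval n (indicator S) x = (if S \<subseteq> {i. x i = 1} then 1 else 0)"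
proof (cases "S \<subseteq> {i. x i = 1}")
  case True
  then have "x i ^ indicator S i = 1" for i
    by (auto simp: indicator_def)
  then show ?thesis using True unfolding monomial_eval_def by simp
next
  case False
  then obtain i where "i \<in> S" "x i \<noteq> 1" by auto
  with assms have "i < n" "x i ^ indicator S i = 0"
    unfolding bool_pt_def by auto
  then show ?thesis using False unfolding monomial_eval_def by (auto intro: prod_zero)
qed

lemma sum_Pow_card:
  assumes "finite K"
  shows "(\<Sum>S\<in>Pow K. f (card S)) = (\<Sum>j\<le>card K. real (card K choose j) * f j)"
proof -
  have "(\<Sum>S\<in>Pow K. f (card S)) = (\<Sum>j\<le>card K. \<Sum>S\<in>{S \<in> Pow K. card S = j}. f (card S))"
    by (rule sum.group[symmetric]) (use assms in \<open>auto intro: card_mono\<close>)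
  also have "\<dots> = (\<Sum>j\<le>card K. real (card K choose j) * f j)"
  proof (rule sum.cong[OF refl])
    fix j
    have "{S \<in> Pow K. card S = j} = {S. S \<subseteq> K \<and> card S = j}" by auto
    then show "(\<Sum>S\<in>{S \<in> Pow K. card S = j}. f (card S)) = real (card K choose j) * f j"
      by (simp add: n_subsets[OF assms])
  qed
  finally show ?thesis .
qed

lemma meval_sym_multilinear:
  assumes "bool_pt n x"
  shows "meval n (sym_multilinear n g) x = binomial_eval g (card {i. i < n \<and> x i = 1})"
proof -
  let ?K = "{i. i < n \<and> x i = 1}"
  have "meval n (sym_multilinear n g) x
      = (\<Sum>\<alpha>\<in>indicator ` Pow {..<n}. sym_multilinear n g \<alpha> * monomial_eval n \<alpha> x)"
    by (rule meval_eq_sum_superset) (auto simp: sym_multilinear_def split: if_splits)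
  also have "\<dots> = (\<Sum>S\<in>Pow {..<n}. sym_multilinear n g (indicator S) * monomial_eval n (indicator S) x)"
    by (rule sum.reindex[OF inj_on_subset[OF inj_indicator subset_UNIV], unfolded comp_def])
  also have "\<dots> = (\<Sum>S\<in>Pow {..<n}. if S \<subseteq> ?K then g (card S) else 0)"
  proof (rule sum.cong[OF refl])
    fix S
    assume "S \<in> Pow {..<n}"
    then have "S \<subseteq> {..<n}" "S \<subseteq> {i. x i = 1} \<longleftrightarrow> S \<subseteq> ?K" by auto
    then show "sym_multilinear n g (indicator S) * monomial_eval n (indicator S) x
        = (if S \<subseteq> ?K then g (card S) else 0)"
      by (simp add: sym_multilinear_def sum_indicator_lessThan monomial_eval_indicator[OF assms])
  qed
  also have "\<dots> = (\<Sum>S\<in>{S \<in> Pow {..<n}. S \<subseteq> ?K}. g (card S))"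
    using sum.inter_filter[of "Pow {..<n}" "\<lambda>S. g (card S)" "\<lambda>S. S \<subseteq> ?K"] by simp
  also have "{S \<in> Pow {..<n}. S \<subseteq> ?K} = Pow ?K"
    by auto
  also have "(\<Sum>S\<in>Pow ?K. g (card S)) = binomial_eval g (card ?K)"
    by (simp add: sum_Pow_card binomial_eval_def mult.commute)
  finally show ?thesis .
qed

definition add_monomial :: "(nat \<Rightarrow> nat) \<Rightarrow> real \<Rightarrow> ((nat \<Rightarrow> nat) \<Rightarrow> real) \<Rightarrow> (nat \<Rightarrow> nat) \<Rightarrow> real" where
  "add_monomial \<beta> a p \<alpha> = p \<alpha> + (if \<alpha> = \<beta> then a else 0)"

lemma add_monomial_support: "{\<alpha>. add_monomial \<beta> a p \<alpha> \<noteq> 0} \<subseteq> insert \<beta> {\<alpha>. p \<alpha> \<noteq> 0}"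
  by (auto simp: add_monomial_def split: if_splits)

lemma mpoly_n_add_monomial:
  assumes "mpoly_n n p" "\<And>i. n \<le> i \<Longrightarrow> \<beta> i = 0"
  shows "mpoly_n n (add_monomial \<beta> a p)"
  using assms finite_subset[OF add_monomial_support] add_monomial_support[of \<beta> a p]
  unfolding mpoly_n_def by blast

lemma meval_add_monomial:
  assumes "mpoly_n n p"
  shows "meval n (add_monomial \<beta> a p) x = meval n p x + a * monomial_eval n \<beta> x"
proof -
  let ?F = "insert \<beta> {\<alpha>. p \<alpha> \<noteq> 0}"
  have "finite ?F" using assms by (simp add: mpoly_n_def)
  then have "meval n (add_monomial \<beta> a p) x
      = (\<Sum>\<alpha>\<in>?F. p \<alpha> * monomial_eval n \<alpha> x) + (\<Sum>\<alpha>\<in>?F. if \<alpha> = \<beta> then a * monomial_eval n \<alpha> x else 0)"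
    by (simp add: meval_eq_sum_superset[OF _ add_monomial_support] add_monomial_def
        distrib_right if_distrib[of "\<lambda>b. b * _"] sum.distrib cong: if_cong)
  also have "(\<Sum>\<alpha>\<in>?F. p \<alpha> * monomial_eval n \<alpha> x) = meval n p x"
    using \<open>finite ?F\<close> by (simp add: meval_eq_sum_superset[of ?F] subset_insertI)
  finally show ?thesis using \<open>finite ?F\<close> by simp
qed

definition x0_power :: "nat \<Rightarrow> nat \<Rightarrow> nat" where
  "x0_power d = (\<lambda>i. if i = 0 then d else 0)"

lemma
  assumes "0 < n"
  shows degree_x0_power: "(\<Sum>i<n. x0_power d i) = d"
    and monomial_eval_x0_power: "monomial_eval n (x0_power d) x = x 0 ^ d"
  using assms unfolding monomial_eval_def x0_power_def
  by (simp_all add: if_distrib[where f="\<lambda>e. x _ ^ e"] prod.delta cong: if_cong)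

text \<open>The choice t = |p(x_0^D)| + 1 keeps the coefficient of x_0^D from cancelling.\<close>

lemma mpoly_n_pad_degree_on_cube:
  assumes p: "mpoly_n n p" and "mdeg n p \<le> D" "2 \<le> D" "0 < n"
  obtains q where "mpoly_n n q" "mdeg n q = D"
    "\<And>x. bool_pt n x \<Longrightarrow> meval n q x = meval n p x"
proof -
  define t where "t = \<bar>p (x0_power D)\<bar> + 1"
  define p' where "p' = add_monomial (x0_power D) t p"
  define q where "q = add_monomial (x0_power 1) (- t) p'"
  have x0_vars: "x0_power d i = 0" if "n \<le> i" for d i
    using that \<open>0 < n\<close> by (simp add: x0_power_def)
  have p': "mpoly_n n p'" and q: "mpoly_n n q"
    using p by (simp_all add: p'_def q_def mpoly_n_add_monomial x0_vars)
  have "x0_power D 0 \<noteq> x0_power 1 0"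
    using \<open>2 \<le> D\<close> by (simp add: x0_power_def)
  then have "x0_power D \<noteq> x0_power 1" by metis
  then have q_D: "q (x0_power D) \<noteq> 0"
    by (simp add: q_def p'_def add_monomial_def t_def)
  have "mdeg n q \<le> D"
  proof (rule mdeg_le)
    show "finite {\<alpha>. q \<alpha> \<noteq> 0}" using q by (simp add: mpoly_n_def)
    fix \<alpha>
    assume "q \<alpha> \<noteq> 0"
    then have "\<alpha> = x0_power 1 \<or> \<alpha> = x0_power D \<or> p \<alpha> \<noteq> 0"
      using add_monomial_support unfolding q_def p'_def by blast
    then show "(\<Sum>i<n. \<alpha> i) \<le> D"
      using degree_x0_power[OF \<open>0 < n\<close>] \<open>2 \<le> D\<close> monomial_degree_le_mdeg[OF p] \<open>mdeg n p \<le> D\<close>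
      by (elim disjE) force+
  qed
  moreover have "D \<le> mdeg n q"
    using monomial_degree_le_mdeg[OF q q_D] degree_x0_power[OF \<open>0 < n\<close>] by simp
  moreover have "meval n q x = meval n p x" if "bool_pt n x" for x
  proof -
    have "x 0 ^ D = x 0"
      using that \<open>0 < n\<close> \<open>2 \<le> D\<close> unfolding bool_pt_def by auto
    then show ?thesis
      unfolding q_def meval_add_monomial[OF p'] unfolding p'_def meval_add_monomial[OF p]
      by (simp add: monomial_eval_x0_power[OF \<open>0 < n\<close>])
  qed
  ultimately show thesis using that q by simp
qed

section \<open>Approximating NAE\<close>

lemma NAE_eq_card:
  assumes "bool_pt n x"
  shows "NAE n x = (if card {i. i < n \<and> x i = 1} \<in> {0, n} then 1 else 0)"
proof -
  let ?K = "{i. i < n \<and> x i = 1}"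
  have "card ?K = 0 \<longleftrightarrow> ?K = {}" by simp
  also have "\<dots> \<longleftrightarrow> (\<forall>i<n. x i \<noteq> 1)" by blast
  also have "\<dots> \<longleftrightarrow> (\<forall>i<n. x i = 0)" using assms unfolding bool_pt_def by force
  finally have empty: "card ?K = 0 \<longleftrightarrow> (\<forall>i<n. x i = 0)" .
  have "card ?K = n \<longleftrightarrow> ?K = {..<n}"
    using card_subset_eq[of "{..<n}" ?K] by force
  also have "\<dots> \<longleftrightarrow> (\<forall>i<n. x i = 1)" by blast
  finally have full: "card ?K = n \<longleftrightarrow> (\<forall>i<n. x i = 1)" .
  show ?thesis unfolding NAE_def using empty full by simp
qed

lemma chebyshev_T_ge_2:
  fixes n D :: nat and c :: real
  assumes "3 \<le> n" "0 < c" "1 < 2 * c + (2/3) * c\<^sup>2 - 2 * c / (3 * (real n - 2))"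
    and "c * (real n - 2) \<le> (real D)\<^sup>2"
  shows "2 \<le> chebyshev_T D (1 + 2 / (real n - 2))"
proof -
  define \<delta> where "\<delta> = 2 / (real n - 2)"
  define s where "s = (real D)\<^sup>2 * \<delta>"
  have "0 < \<delta>" "\<delta> \<le> 2" using \<open>3 \<le> n\<close> by (auto simp: \<delta>_def field_simps)
  have "2 * c \<le> s" using assms(1,4) by (simp add: s_def \<delta>_def field_simps)
  have hyp: "1 < 2 * c + (4 * c\<^sup>2 - 2 * c * \<delta>) / 6"
    using assms(3) \<open>3 \<le> n\<close> by (simp add: \<delta>_def field_simps power2_eq_square)
  have "1 + 2 * c + (4 * c\<^sup>2 - 2 * c * \<delta>) / 6 \<le> 1 + s + (s\<^sup>2 - s * \<delta>) / 6"
  proof -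
    have "1 + s + (s\<^sup>2 - s * \<delta>) / 6 - (1 + 2 * c + (4 * c\<^sup>2 - 2 * c * \<delta>) / 6)
        = (s - 2 * c) * (6 + s + 2 * c - \<delta>) / 6"
      by (simp add: field_simps power2_eq_square)
    moreover have "0 \<le> (s - 2 * c) * (6 + s + 2 * c - \<delta>) / 6"
      using \<open>2 * c \<le> s\<close> \<open>\<delta> \<le> 2\<close> \<open>0 < c\<close> by simp
    ultimately show ?thesis by linarith
  qed
  also have "\<dots> = chebyshev_T_minorant \<delta> D"
    by (simp add: chebyshev_T_minorant_def s_def algebra_simps power2_eq_square)
  also have "\<dots> \<le> chebyshev_T D (1 + \<delta>)"
    using \<open>0 < \<delta>\<close> by (simp add: chebyshev_T_minorant_le)
  finally show ?thesis using hyp by (simp add: \<delta>_def)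
qed

lemma NAE_approx13_chebyshev:
  assumes "3 \<le> n" "even D" and M: "2 \<le> chebyshev_T D (1 + 2 / (real n - 2))"
  shows "\<exists>p. mpoly_n n p \<and> mdeg n p \<le> D \<and> approx13 n p (NAE n)"
proof -
  define M where "M = chebyshev_T D (1 + 2 / (real n - 2))"
  define u where "u = 2 / (real n - 2)"
  define v where "v = - real n / (real n - 2)"
  define y where "y k = u * real k + v" for k :: nat
  define p where "p = sym_multilinear n (\<lambda>j. chebyshev_coeffs u v D j / max 3 M)"
  have n2: "0 < real n - 2" using \<open>3 \<le> n\<close> by simp
  have eval: "meval n p x = chebyshev_T D (y (card {i. i < n \<and> x i = 1})) / max 3 M"
    if "bool_pt n x" for x
  proof -
    have "meval n p x = binomial_eval (chebyshev_coeffs u v D) (card {i. i < n \<and> x i = 1}) / max 3 M"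
      by (simp add: p_def meval_sym_multilinear[OF that] binomial_eval_def sum_divide_distrib)
    then show ?thesis by (simp add: binomial_eval_chebyshev_coeffs y_def)
  qed
  have "approx13 n p (NAE n)"
    unfolding approx13_def
  proof (intro allI impI)
    fix x
    assume x: "bool_pt n x"
    define k where "k = card {i. i < n \<and> x i = 1}"
    have "k \<le> n" unfolding k_def using card_mono[of "{..<n}" "{i. i < n \<and> x i = 1}"] by auto
    show "\<bar>NAE n x - meval n p x\<bar> \<le> 1 / 3"
    proof (cases "k \<in> {0, n}")
      case True
      have "y 0 = - (1 + 2 / (real n - 2))"
        using n2 by (simp add: y_def v_def field_simps)
      moreover have "y n = (2 * real n - real n) / (real n - 2)"
        by (simp add: y_def u_def v_def diff_divide_distrib)
      moreover have "\<dots> = 1 + 2 / (real n - 2)"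
        using n2 by (simp add: field_simps)
      ultimately have "y k = 1 + 2 / (real n - 2) \<or> y k = - (1 + 2 / (real n - 2))"
        using True by auto
      then have "chebyshev_T D (y k) = M"
        using chebyshev_T_minus[of D "1 + 2 / (real n - 2)"] \<open>even D\<close> by (auto simp: M_def)
      moreover have "\<bar>1 - M / max 3 M\<bar> \<le> 1 / 3"
        using M unfolding M_def[symmetric] by (cases "M \<le> 3") (auto simp: max_def field_simps)
      ultimately show ?thesis
        using True x by (simp add: NAE_eq_card eval k_def[symmetric])
    next
      case False
      then have "1 \<le> real k" "real k + 1 \<le> real n"
        using \<open>k \<le> n\<close> by auto
      moreover have "y k = (2 * real k - real n) / (real n - 2)"
        by (simp add: y_def u_def v_def diff_divide_distrib)
      ultimately have "\<bar>y k\<bar> \<le> 1"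
        using n2 by (simp add: abs_le_iff divide_le_eq le_divide_eq)
      then have "\<bar>chebyshev_T D (y k)\<bar> \<le> 1"
        by (rule abs_chebyshev_T_le_1)
      then have "3 * \<bar>chebyshev_T D (y k)\<bar> \<le> max 3 M"
        by linarith
      then have "\<bar>chebyshev_T D (y k) / max 3 M\<bar> \<le> 1 / 3"
        by (simp add: abs_divide field_simps)
      then show ?thesis
        using False x by (simp add: NAE_eq_card eval k_def[symmetric])
    qed
  qed
  moreover have "mdeg n p \<le> D"
    unfolding p_def by (rule mdeg_sym_multilinear_le) (simp add: chebyshev_coeffs_eq_0)
  ultimately show ?thesis
    using mpoly_n_sym_multilinear p_def by blast
qed

theorem theorem9:
  fixes n :: nat and c :: real
  assumes "n \<ge> 3" and "c > 0"
    and "2 * c + (2/3) * c^2 - 2 * c / (3 * (real n - 2)) > 1"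
  shows "let d = nat \<lceil>sqrt (c * (real n - 2))\<rceil> in
         \<exists>p. mpoly_n n p \<and> mdeg n p = (if even d then d else d + 1) \<and> approx13 n p (NAE n)"
proof -
  define d where "d = nat \<lceil>sqrt (c * (real n - 2))\<rceil>"
  define D where "D = (if even d then d else d + 1)"
  have pos: "0 < c * (real n - 2)" using assms(1,2) by simp
  have sqrt_pos: "0 < sqrt (c * (real n - 2))" using pos by simp
  then have "real d = of_int \<lceil>sqrt (c * (real n - 2))\<rceil>"
    unfolding d_def by simp
  then have le_d: "sqrt (c * (real n - 2)) \<le> real d"
    by (simp add: le_of_int_ceiling)
  with sqrt_pos have "0 < real d" by linarith
  with le_d have "sqrt (c * (real n - 2)) \<le> real D" "2 \<le> D" "even D"
    unfolding D_def by auto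
  then have "c * (real n - 2) \<le> (real D)\<^sup>2" "2 \<le> D" "even D"
    by (auto intro: sqrt_le_D)
  then obtain p where p: "mpoly_n n p" "mdeg n p \<le> D" "approx13 n p (NAE n)"
    using NAE_approx13_chebyshev chebyshev_T_ge_2 assms by blast
  then obtain q where "mpoly_n n q" "mdeg n q = D" "\<And>x. bool_pt n x \<Longrightarrow> meval n q x = meval n p x"
    using mpoly_n_pad_degree_on_cube \<open>2 \<le> D\<close> assms(1) by (metis gr0I not_numeral_le_zero)
  then have "approx13 n q (NAE n)" using p(3) by (simp add: approx13_def)
  then show ?thesis
    using \<open>mpoly_n n q\<close> \<open>mdeg n q = D\<close> unfolding Let_def d_def[symmetric] D_def by blast
qed

end
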